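(* Let $c\in C$ and $t\in\mathbb{Z}^+$ with $t\ge 2$. Suppose Assumption 1 (Instantaneous Exponential Growth): $\mathbb{E}[\ln(I^t_{s,c})\mid s,X_{t,c}]=\alpha(X_{t,c})+r(X_{t,c})s+\mathbb{E}[\varepsilon_{t,c}\mid X_{t,c}]$, and Assumption 2 (Overlap): $\mathbb{E}[\ln(I^t_{s,c})\mid s=t-1,X_{t,c}]=\mathbb{E}[\ln(I^{t-1}_{s,c})\mid s=t-1,X_{t-1,c}]$ hold. Then the county-level instantaneous exponential growth rate is identified as $$r_{t,c}=\mathbb{E}[\ln(I^t_{s,c})\mid s=t,X_{t,c}]-\mathbb{E}[\ln(I^{t-1}_{s,c})\mid s=t-1,X_{t-1,c}].$$
   Context: Let $C$ be a finite set of counties and $\mathbb{Z}^+=\{1,2,3,\dots\}$ the set of days. For county $c$ and day $s$, $I_{s,c}>0$ is the observed incident case number and $X_{s,c}$ a (random) feature vector; $\alpha(\cdot)$, $r(\cdot)$ are functions of the features. Actual growth model: $\ln(I_{s,c})=\alpha(X_{s,c})+r(X_{s,c})s+\varepsilon_{s,c}$. For each $t\in\mathbb{Z}^+$, potential growth model: $\ln(I^t_{s,c})=\alpha(X_{t,c})+r(X_{t,c})s+\varepsilon_{t,c}$, where $I^t_{s,c}$ is the potential incident case number of county $c$ on day $s$ if spread followed the day-$t$ pattern, with $I^s_{s,c}=I_{s,c}$ observed. The day $s$ is a random variable. The instantaneous county-level exponential growth rate is $r_{t,c}:=\mathbb{E}[\ln(I^t_{s,c}/I^t_{s-1,c})\mid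 X_{t,c}]$. *)

theory Defs
  imports "HOL-Probability.Probability"
begin

text \<open>Regression-function version of a conditional expectation:
  cond_exp_fun M N Z Y g  means  g(z) = E[Y | Z = z], i.e. the random variable
  g(Z) is (almost everywhere) the conditional expectation of Y given the
  sigma-algebra generated by Z (library notion real_cond_exp).\<close>
definition cond_exp_fun ::
  "'w measure \<Rightarrow> 'z measure \<Rightarrow> ('w \<Rightarrow> 'z) \<Rightarrow> ('w \<Rightarrow> real) \<Rightarrow> ('z \<Rightarrow> real) \<Rightarrow> bool" where
  "cond_exp_fun M N Z Y g \<longleftrightarrow>
     Z \<in> measurable M N \<and> g \<in> borel_measurable N \<and> integrable M Y \<and>
     (AE \<omega> in M. g (Z \<omega>) = real_cond_exp M (vimage_algebra (space M) Z N) Y \<omega>)"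

end

theory Submission
  imports Defs
begin

text \<open>Under the potential growth model the day-t pattern is exactly log-linear in the day, so
  the log growth ratio is the deterministic function r(X t c) of the conditioning variable and
  is therefore its own conditional expectation. On the other side, Assumption 1 makes the
  regression m1 affine in the day with slope r, and Assumption 2 replaces m1 at day t - 1 by the
  observable regression m2.\<close>

lemma subalgebra_vimage_algebra:
  assumes "Z \<in> measurable M N"
  shows "subalgebra M (vimage_algebra (space M) Z N)"
  using sets_image_in_sets[OF refl assms] by (simp add: subalgebra_def)

lemma (in finite_measure) cond_exp_fun_AE_eq_factor:
  assumes ce: "cond_exp_fun M N Z Y g"
    and factor: "\<forall>\<omega>\<in>space M. Y \<omega> = h (Z \<omega>)" and h: "h \<in> borel_measurable N"
  shows "AE \<omega> in M. g (Z \<omega>) = h (Z \<omega>)"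
proof -
  let ?F = "vimage_algebra (space M) Z N"
  have Z: "Z \<in> measurable M N" and Y: "integrable M Y"
    and g: "AE \<omega> in M. g (Z \<omega>) = real_cond_exp M ?F Y \<omega>"
    using ce unfolding cond_exp_fun_def by auto
  interpret finite_measure_subalgebra M ?F
    by unfold_locales (rule subalgebra_vimage_algebra[OF Z])
  have "Z \<in> measurable ?F N"
    using measurable_space[OF Z] by (intro measurable_vimage_algebra1) blast
  then have "(\<lambda>\<omega>. h (Z \<omega>)) \<in> borel_measurable ?F"
    using h by measurable
  then have "Y \<in> borel_measurable ?F"
    by (rule measurable_cong[THEN iffD2, rotated]) (simp add: factor)
  then have "AE \<omega> in M. real_cond_exp M ?F Y \<omega> = Y \<omega>"
    using Y by (rule real_cond_exp_F_meas[rotated])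
  with g AE_space show ?thesis
    by eventually_elim (simp add: factor)
qed

lemma ln_ratio_of_log_linear:
  fixes f :: "nat \<Rightarrow> real"
  assumes pos: "\<And>d. f d > 0" and log_linear: "\<And>d. ln (f d) = a + b * real d" and "k \<ge> 1"
  shows "ln (f k / f (k - 1)) = b"
proof -
  have "ln (f k / f (k - 1)) = ln (f k) - ln (f (k - 1))"
    using pos[of k] pos[of "k - 1"] by (simp add: ln_div)
  also have "\<dots> = b * (real k - real (k - 1))"
    by (simp add: log_linear algebra_simps)
  finally show ?thesis
    using \<open>k \<ge> 1\<close> by (simp add: of_nat_diff)
qed

theorem theorem1:
  fixes M :: "'w measure" and MX :: "'x measure"
    and C :: "'c set" and c :: 'c and t :: nat
    and s :: "'w \<Rightarrow> nat"
    and X :: "nat \<Rightarrow> 'c \<Rightarrow> 'w \<Rightarrow> 'x"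
    and eps :: "nat \<Rightarrow> 'c \<Rightarrow> 'w \<Rightarrow> real"
    and \<alpha> r :: "'x \<Rightarrow> real"
    and Iobs :: "nat \<Rightarrow> 'c \<Rightarrow> 'w \<Rightarrow> real"
    and Ipot :: "nat \<Rightarrow> nat \<Rightarrow> 'c \<Rightarrow> 'w \<Rightarrow> real"
    and rate :: "'x \<Rightarrow> real" and e :: "'x \<Rightarrow> real"
    and m1 m2 :: "nat \<times> 'x \<Rightarrow> real"
  assumes M: "prob_space M"
    and C: "finite C" and c: "c \<in> C" and t: "t \<ge> 2"
    and s_meas: "s \<in> measurable M (count_space UNIV)"
    and s_pos: "\<forall>\<omega>\<in>space M. s \<omega> \<ge> 1"
    and X_meas: "\<forall>d cc. X d cc \<in> measurable M MX"
    and eps_meas: "\<forall>d cc. eps d cc \<in> borel_measurable M"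
    and \<alpha>_meas: "\<alpha> \<in> borel_measurable MX" and r_meas: "r \<in> borel_measurable MX"
    and Iobs_pos: "\<forall>d\<ge>1. \<forall>cc\<in>C. \<forall>\<omega>\<in>space M. Iobs d cc \<omega> > 0"
    and actual_model: "\<forall>d\<ge>1. \<forall>cc\<in>C. \<forall>\<omega>\<in>space M.
          ln (Iobs d cc \<omega>) = \<alpha> (X d cc \<omega>) + r (X d cc \<omega>) * real d + eps d cc \<omega>"
    and Ipot_pos: "\<forall>tt\<ge>1. \<forall>d. \<forall>cc\<in>C. \<forall>\<omega>\<in>space M. Ipot tt d cc \<omega> > 0"
    and potential_model: "\<forall>tt\<ge>1. \<forall>d. \<forall>cc\<in>C. \<forall>\<omega>\<in>space M.
          ln (Ipot tt d cc \<omega>) = \<alpha> (X tt cc \<omega>) + r (X tt cc \<omega>) * real d + eps tt cc \<omega>"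
    and consistency: "\<forall>d\<ge>1. \<forall>cc\<in>C. \<forall>\<omega>\<in>space M. Ipot d d cc \<omega> = Iobs d cc \<omega>"
    and rate_def: "cond_exp_fun M MX (X t c)
          (\<lambda>\<omega>. ln (Ipot t (s \<omega>) c \<omega> / Ipot t (s \<omega> - 1) c \<omega>)) rate"
    and m1: "cond_exp_fun M (count_space UNIV \<Otimes>\<^sub>M MX) (\<lambda>\<omega>. (s \<omega>, X t c \<omega>))
          (\<lambda>\<omega>. ln (Ipot t (s \<omega>) c \<omega>)) m1"
    and e: "cond_exp_fun M MX (X t c) (eps t c) e"
    and assumption1: "\<forall>k\<ge>1. \<forall>x\<in>space MX. m1 (k, x) = \<alpha> x + r x * real k + e x"
    and m2: "cond_exp_fun M (count_space UNIV \<Otimes>\<^sub>M MX) (\<lambda>\<omega>. (s \<omega>, X (t - 1) c \<omega>))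
          (\<lambda>\<omega>. ln (Ipot (t - 1) (s \<omega>) c \<omega>)) m2"
    and assumption2: "AE \<omega> in M. m1 (t - 1, X t c \<omega>) = m2 (t - 1, X (t - 1) c \<omega>)"
  shows "AE \<omega> in M. rate (X t c \<omega>) = m1 (t, X t c \<omega>) - m2 (t - 1, X (t - 1) c \<omega>)"
proof -
  have t1: "t \<ge> 1" using t by simp
  have log_ratio: "\<forall>\<omega>\<in>space M. ln (Ipot t (s \<omega>) c \<omega> / Ipot t (s \<omega> - 1) c \<omega>) = r (X t c \<omega>)"
  proof
    fix \<omega> assume "\<omega> \<in> space M"
    then show "ln (Ipot t (s \<omega>) c \<omega> / Ipot t (s \<omega> - 1) c \<omega>) = r (X t c \<omega>)"
      using Ipot_pos potential_model s_pos t1 c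
      by (intro ln_ratio_of_log_linear[where a = "\<alpha> (X t c \<omega>) + eps t c \<omega>"]) auto
  qed
  have rate_eq: "AE \<omega> in M. rate (X t c \<omega>) = r (X t c \<omega>)"
    using M r_meas log_ratio rate_def
    by (intro finite_measure.cond_exp_fun_AE_eq_factor) (auto simp: prob_space_def)
  have slope: "m1 (t, x) - m1 (t - 1, x) = r x" if "x \<in> space MX" for x
    using assumption1 that t by (simp add: of_nat_diff algebra_simps)
  show ?thesis
    using rate_eq assumption2 AE_space
  proof eventually_elim
    case (elim \<omega>)
    then have "X t c \<omega> \<in> space MX"
      using measurable_space[OF X_meas[rule_format]] by blast
    with elim(1,2) slope show ?case by (metis eq_diff_eq')
  qed
qed

end
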